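(* Let $X=Y=\{x\in\mathbb{R}^3:x_3=0\}$ both carry a compactly supported probability measure $\mu$ with $d\mu(x_1,x_2,0)=h(x_1,x_2)\,d\mathcal{L}_2(x_1,x_2)$ for some nonnegative integrable $h$, and let $Z=\{z\in\mathbb{R}^3:|z|=1\}$ carry $d\gamma=\alpha\,dS$ where $dS$ is the surface measure and $\alpha$ is a positive continuous function with $\alpha(z_1,z_2,z_3)=\alpha(z_1,z_2,-z_3)$ and $\int_Z\alpha\,dS=1$. Consider $\inf\{\int(|x-y|^2+|x-z|^2+|y-z|^2)\,d\lambda:\lambda\in\Pi(\mu,\mu,\gamma)\}$. Then (i) every optimal plan $\lambda$ satisfies $x=y$ for all $(x,y,z)\in\mathrm{Spt}(\lambda)$; and (ii) if this problem has an optimal plan of the form $(\mathrm{id}\times T\times G)\#\mu$ with measurable $T:X\to Y$, $G=(G_1,G_2,G_3):X\to Z$, then $T=\mathrm{id}$ $\mu$-a.e. and $(\mathrm{id}\times\mathrm{id}\times\tilde G)\#\mu$ with $\tilde G=(G_1,G_2,-G_3)$ is also an optimal plan; in particular, if $G_3\neq0$ on a set of positive $\mu$-measure, the optimal plan is not unique.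
   Context: $|\cdot|$ is the Euclidean norm on $\mathbb{R}^3$, $\mathcal{L}_2$ Lebesgue measure on $\mathbb{R}^2$. $\Pi(\mu,\mu,\gamma)$ is the set of Borel probability measures on $X\times Y\times Z$ with marginals $\mu,\mu,\gamma$; $\mathrm{Spt}$ denotes support; $(\mathrm{id}\times T\times G)\#\mu$ is the push-forward of $\mu$ under $x\mapsto(x,T(x),G(x))$. *)

theory Defs
  imports "HOL-Probability.Probability"
begin

type_synonym pt = "real \<times> real \<times> real"

definition Spt :: "'a::topological_space measure \<Rightarrow> 'a set" where
  "Spt M = {x. \<forall>U. open U \<and> x \<in> U \<longrightarrow> emeasure M U > 0}"

text \<open>Surface measure on the unit sphere of R^3, via the cone construction:
  S(A) = 3 * Lebesgue measure of {t a : a in A, 0 < t <= 1}, realised as push-forward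
  of 3 times Lebesgue measure on the unit ball under radial projection x / |x|.\<close>
definition surfS2 :: "pt measure" where
  "surfS2 = distr (density lborel (\<lambda>x. 3 * indicator (ball 0 1) x)) borel (\<lambda>x. x /\<^sub>R norm x)"

definition plans :: "pt measure \<Rightarrow> pt measure \<Rightarrow> pt measure \<Rightarrow> (pt \<times> pt \<times> pt) measure set" where
  "plans \<mu> \<nu> \<gamma> = {L. sets L = sets borel \<and> prob_space L \<and>
      distr L borel fst = \<mu> \<and> distr L borel (\<lambda>p. fst (snd p)) = \<nu> \<and>
      distr L borel (\<lambda>p. snd (snd p)) = \<gamma>}"

definition cost3 :: "pt \<times> pt \<times> pt \<Rightarrow> real" where
  "cost3 = (\<lambda>(x, y, z). (norm (x - y))\<^sup>2 + (norm (x - z))\<^sup>2 + (norm (y - z))\<^sup>2)"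

definition optimal_plan :: "pt measure \<Rightarrow> pt measure \<Rightarrow> pt measure \<Rightarrow> (pt \<times> pt \<times> pt) measure \<Rightarrow> bool" where
  "optimal_plan \<mu> \<nu> \<gamma> L \<longleftrightarrow> L \<in> plans \<mu> \<nu> \<gamma> \<and>
     (\<forall>L'\<in>plans \<mu> \<nu> \<gamma>. (\<integral>\<^sup>+p. ennreal (cost3 p) \<partial>L) \<le> (\<integral>\<^sup>+p. ennreal (cost3 p) \<partial>L'))"

end

theory Submission
  imports Defs
begin

text \<open>Part (i) is an averaging argument. Collapsing an optimal plan onto its first marginal,
  (x, y, z) \<mapsto> (x, x, z), or onto its second, (x, y, z) \<mapsto> (y, y, z), again gives plans in
  \<Pi>(\<mu>, \<mu>, \<gamma>), and pointwise
    cost3 (x, x, z) + cost3 (y, y, z) + 2 |x - y|^2 = 2 cost3 (x, y, z).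
  Integrating and using optimality twice forces \<integral> |x - y|^2 d\<lambda> = 0, all costs being finite
  because \<mu> has compact support and \<gamma> lives on the unit sphere. For part (ii) the plan is then
  concentrated on x = y in the plane x3 = 0, where |x - z| is unchanged by reflecting z
  in that plane; the reflection preserves \<gamma> by the symmetry of \<alpha> and of the surface measure,
  so the reflected plan is admissible with the same cost.\<close>

text \<open>The measurability prover does not identify borel on a product type with the product of
  the borel measures, so the projections are registered directly.\<close>

lemma borel_measurable_fst[measurable]:
  "(fst :: 'a::topological_space \<times> 'b::topological_space \<Rightarrow> 'a) \<in> borel_measurable borel"
  by (intro borel_measurable_continuous_onI continuous_intros)

lemma borel_measurable_snd[measurable]:
  "(snd :: 'a::topological_space \<times> 'b::topological_space \<Rightarrow> 'b) \<in> borel_measurable borel"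
  by (intro borel_measurable_continuous_onI continuous_intros)

subsection \<open>Support of a measure\<close>

lemma Spt_compl_null:
  fixes M :: "'a::second_countable_topology measure"
  assumes sM: "sets M = sets borel"
  shows "- Spt M \<in> null_sets M"
proof -
  obtain B :: "'a set set" where B: "countable B" "topological_basis B"
    using ex_countable_basis by blast
  let ?N = "{b\<in>B. emeasure M b = 0}"
  have open_B: "\<And>b. b \<in> B \<Longrightarrow> open b" using B(2) topological_basis_open by blast
  have "- Spt M \<subseteq> \<Union>?N"
  proof
    fix x assume "x \<in> - Spt M"
    then obtain U where U: "open U" "x \<in> U" "emeasure M U = 0"
      unfolding Spt_def by (auto simp: not_less)
    obtain b where b: "b \<in> B" "x \<in> b" "b \<subseteq> U" using B(2) U(1,2) topological_basisE by blast
    have "emeasure M b \<le> emeasure M U"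
      by (rule emeasure_mono) (use b U open_B sM in auto)
    with U b show "x \<in> \<Union>?N" by auto
  qed
  moreover have "\<Union>?N \<in> null_sets M"
    using null_sets_UN'[of ?N "\<lambda>b. b" M] B(1) open_B sM by (auto simp: null_sets_def)
  moreover have "open (- Spt M)"
  proof -
    have "- Spt M = \<Union>{U. open U \<and> emeasure M U = 0}"
      unfolding Spt_def by (auto simp: not_less)
    then show ?thesis by auto
  qed
  ultimately show ?thesis using sM null_sets_subset by (metis borel_open)
qed

lemma Spt_subset_if_AE_closed:
  assumes "closed C" and "sets M = sets borel" and "AE x in M. x \<in> C"
  shows "Spt M \<subseteq> C"
proof
  fix x assume x: "x \<in> Spt M"
  have "emeasure M (- C) = 0"
    using AE_iff_measurable[of "- C" M "\<lambda>x. x \<in> C"] assms sets_eq_imp_space_eq[of M borel]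
    by (auto simp: borel_open open_Compl)
  with x \<open>closed C\<close> show "x \<in> C" unfolding Spt_def by (auto simp: open_Compl)
qed

lemma nn_integral_norm_sq_finite_if_compact_Spt:
  fixes M :: "'a::{real_normed_vector, second_countable_topology} measure"
  assumes "finite_measure M" and sM: "sets M = sets borel" and "compact (Spt M)"
  shows "(\<integral>\<^sup>+x. ennreal ((norm x)\<^sup>2) \<partial>M) < \<infinity>"
proof -
  have "bounded (Spt M)" using \<open>compact (Spt M)\<close> compact_imp_bounded by blast
  then obtain R where R: "\<forall>x\<in>Spt M. norm x \<le> R" by (auto simp: bounded_iff)
  have "AE x in M. x \<notin> - Spt M" by (rule AE_not_in[OF Spt_compl_null[OF sM]])
  then have "AE x in M. ennreal ((norm x)\<^sup>2) \<le> ennreal (R\<^sup>2)"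
    by eventually_elim (use R in \<open>auto intro!: ennreal_leI power_mono\<close>)
  then have "(\<integral>\<^sup>+x. ennreal ((norm x)\<^sup>2) \<partial>M) \<le> ennreal (R\<^sup>2) * emeasure M (space M)"
    by (subst nn_integral_const[symmetric]) (rule nn_integral_mono_AE)
  also have "\<dots> < \<infinity>"
    using finite_measure.emeasure_finite[OF \<open>finite_measure M\<close>]
    by (simp add: ennreal_mult_less_top top.not_eq_extremum)
  finally show ?thesis .
qed

subsection \<open>Reflection in the plane x3 = 0\<close>

definition refl3 :: "pt \<Rightarrow> pt" where
  "refl3 z = (fst z, fst (snd z), - snd (snd z))"

lemma refl3_measurable[measurable]: "refl3 \<in> borel_measurable borel"
  unfolding refl3_def by (intro borel_measurable_continuous_onI continuous_intros)

lemma refl3_scaleR: "refl3 (c *\<^sub>R z) = c *\<^sub>R refl3 z"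
  by (simp add: refl3_def)

lemma power2_norm_pt: "(norm (u::pt))\<^sup>2 = (fst u)\<^sup>2 + (fst (snd u))\<^sup>2 + (snd (snd u))\<^sup>2"
  by (cases u) (simp add: norm_Pair)

lemma norm_refl3[simp]: "norm (refl3 z) = norm z"
proof -
  have "(norm (refl3 z))\<^sup>2 = (norm z)\<^sup>2" by (simp add: power2_norm_pt refl3_def)
  then show ?thesis by (simp add: power2_eq_iff_nonneg)
qed

lemma norm_diff_refl3:
  assumes "snd (snd x) = 0"
  shows "norm (x - refl3 z) = norm (x - z)"
proof -
  have "(norm (x - refl3 z))\<^sup>2 = (norm (x - z))\<^sup>2" using assms by (simp add: power2_norm_pt refl3_def)
  then show ?thesis by (simp add: power2_eq_iff_nonneg)
qed

lemma lborel_reflect_snd: "distr lborel borel (\<lambda>(x::real, y::real). (x, - y)) = lborel"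
proof -
  have "(lborel :: (real \<times> real) measure) = lborel \<Otimes>\<^sub>M lborel" by (rule lborel_prod[symmetric])
  also have "\<dots> = distr lborel borel (\<lambda>x. x) \<Otimes>\<^sub>M distr lborel borel uminus"
    by (simp add: lborel_distr_uminus distr_id2)
  also have "\<dots> = distr (lborel \<Otimes>\<^sub>M lborel) (borel \<Otimes>\<^sub>M borel) (\<lambda>(x, y). (x, - y))"
    by (rule pair_measure_distr)
      (auto simp: lborel_distr_uminus intro: lborel.sigma_finite_measure_axioms)
  also have "\<dots> = distr lborel borel (\<lambda>(x::real, y::real). (x, - y))"
    by (simp add: lborel_prod borel_prod)
  finally show ?thesis ..
qed

lemma lborel_refl3: "distr lborel borel refl3 = lborel"
proof -
  let ?R = "\<lambda>(x::real, y::real). (x, - y)"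
  have "sigma_finite_measure (distr lborel borel ?R)"
    by (simp add: lborel_reflect_snd lborel.sigma_finite_measure_axioms)
  moreover have "?R \<in> borel_measurable borel"
    by (simp add: case_prod_beta')
  ultimately have "distr lborel borel (\<lambda>x. x) \<Otimes>\<^sub>M distr lborel borel ?R
      = distr (lborel \<Otimes>\<^sub>M lborel) (borel \<Otimes>\<^sub>M borel) (\<lambda>(x, y). (x, ?R y))"
    by (intro pair_measure_distr) simp_all
  also have "\<dots> = distr lborel borel refl3"
    by (rule distr_cong) (simp_all only: lborel_prod borel_prod, auto simp: refl3_def)
  finally show ?thesis
    by (simp add: lborel_reflect_snd distr_id2 lborel_prod)
qed

lemma distr_density_invariant:
  fixes M :: "'a::topological_space measure"
  assumes sM: "sets M = sets borel" and [measurable]: "R \<in> borel_measurable borel"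
    and MR: "distr M borel R = M" and [measurable]: "g \<in> borel_measurable borel"
    and gR: "\<And>x. g (R x) = g x"
  shows "distr (density M g) borel R = density M g"
proof (rule measure_eqI)
  note mM = measurable_cong_sets[OF sM refl]
  have space_M: "space M = UNIV" using sets_eq_imp_space_eq[OF sM] by simp
  fix A assume "A \<in> sets (distr (density M g) borel R)"
  then have A: "A \<in> sets borel" by simp
  have "emeasure (distr (density M g) borel R) A = emeasure (density M g) (R -` A)"
    using A by (subst emeasure_distr) (auto simp: mM space_M)
  also have "\<dots> = (\<integral>\<^sup>+x. g x * indicator (R -` A) x \<partial>M)"
    using A measurable_sets[of R M borel A] by (intro emeasure_density) (auto simp: mM space_M)
  also have "\<dots> = (\<integral>\<^sup>+x. (\<lambda>y. g y * indicator A y) (R x) \<partial>M)"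
    by (intro nn_integral_cong) (simp add: gR indicator_def)
  also have "\<dots> = (\<integral>\<^sup>+y. g y * indicator A y \<partial>distr M borel R)"
    using A by (intro nn_integral_distr[symmetric]) (auto simp: mM)
  also have "\<dots> = emeasure (density M g) A"
    unfolding MR by (rule emeasure_density[symmetric]) (use A sM in \<open>auto simp: mM\<close>)
  finally show "emeasure (distr (density M g) borel R) A = emeasure (density M g) A" .
qed (use sM in simp)

lemma surfS2_refl3: "distr surfS2 borel refl3 = surfS2"
proof -
  define D :: "pt measure" where "D = density lborel (\<lambda>x. 3 * indicator (ball 0 1) x)"
  define N :: "pt \<Rightarrow> pt" where "N = (\<lambda>x. x /\<^sub>R norm x)"
  have [measurable]: "N \<in> borel_measurable borel" unfolding N_def by measurable
  note mD = measurable_cong_sets[of D borel, OF _ refl, simplified D_def, simplified]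
  have DR: "distr D borel refl3 = D"
    unfolding D_def by (rule distr_density_invariant) (auto simp: lborel_refl3 indicator_def)
  have "distr surfS2 borel refl3 = distr D borel (refl3 \<circ> N)"
    unfolding surfS2_def D_def[symmetric] N_def[symmetric] by (rule distr_distr) (auto simp: mD D_def)
  also have "refl3 \<circ> N = N \<circ> refl3" by (simp add: fun_eq_iff N_def refl3_scaleR)
  also have "distr D borel (N \<circ> refl3) = distr (distr D borel refl3) borel N"
    by (rule distr_distr[symmetric]) (auto simp: mD D_def)
  also have "\<dots> = surfS2" by (simp only: DR) (simp add: surfS2_def D_def N_def)
  finally show ?thesis .
qed

lemma nn_integral_norm_sq_density_sphere:
  fixes M :: "'a::real_normed_vector measure"
  assumes "sets M = sets borel" and "(\<lambda>z. ennreal (f z * indicator (sphere 0 1) z)) \<in> borel_measurable M"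
  shows "(\<integral>\<^sup>+z. ennreal ((norm z)\<^sup>2) \<partial>density M (\<lambda>z. ennreal (f z * indicator (sphere 0 1) z)))
    = (\<integral>\<^sup>+z. ennreal (f z * indicator (sphere 0 1) z) \<partial>M)"
  using assms by (subst nn_integral_density)
    (auto simp: measurable_cong_sets[OF assms(1) refl] indicator_def intro!: nn_integral_cong)

lemma borel_measurable_sphere_density:
  fixes \<alpha> :: "'a::euclidean_space \<Rightarrow> real"
  assumes "continuous_on (sphere 0 1) \<alpha>"
  shows "(\<lambda>z. \<alpha> z * indicator (sphere 0 1) z) \<in> borel_measurable borel"
proof -
  have "(\<lambda>z. indicator (sphere 0 1) z *\<^sub>R \<alpha> z) \<in> borel_measurable borel"
    by (rule borel_measurable_continuous_on_indicator) (simp_all add: assms)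
  then show ?thesis by (simp add: mult.commute)
qed

lemma distr_refl3_sphere_density:
  fixes \<alpha> :: "pt \<Rightarrow> real"
  assumes cont: "continuous_on (sphere 0 1) \<alpha>"
    and sym: "\<forall>z\<in>sphere 0 1. \<alpha> (fst z, fst (snd z), - snd (snd z)) = \<alpha> z"
  defines "\<gamma> \<equiv> density surfS2 (\<lambda>z. ennreal (\<alpha> z * indicator (sphere 0 1) z))"
  shows "distr \<gamma> borel refl3 = \<gamma>"
  unfolding \<gamma>_def
proof (rule distr_density_invariant[OF _ refl3_measurable surfS2_refl3])
  fix z :: pt
  have "refl3 z \<in> sphere 0 1 \<longleftrightarrow> z \<in> sphere 0 1" by simp
  then show "ennreal (\<alpha> (refl3 z) * indicator (sphere 0 1) (refl3 z))
      = ennreal (\<alpha> z * indicator (sphere 0 1) z)"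
    using sym by (auto simp: refl3_def indicator_def)
qed (use borel_measurable_sphere_density[OF cont] in \<open>simp_all add: surfS2_def\<close>)

subsection \<open>Optimal plans are concentrated on the diagonal x = y\<close>

lemma plans_collapse:
  assumes L: "L \<in> plans \<mu> \<nu> \<gamma>" and [measurable]: "s \<in> borel_measurable borel"
    and s: "distr L borel s = \<kappa>"
  shows "distr L borel (\<lambda>p. (s p, s p, snd (snd p))) \<in> plans \<kappa> \<kappa> \<gamma>"
proof -
  have sL: "sets L = sets borel" and "prob_space L" and \<gamma>: "distr L borel (\<lambda>p. snd (snd p)) = \<gamma>"
    using L unfolding plans_def by auto
  let ?F = "\<lambda>p. (s p, s p, snd (snd p))"
  have F: "?F \<in> measurable L borel" by (simp add: measurable_cong_sets[OF sL refl])
  then have "distr (distr L borel ?F) borel g = distr L borel (g \<circ> ?F)"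
    if "g \<in> borel_measurable borel" for g :: "pt \<times> pt \<times> pt \<Rightarrow> pt"
    using that by (simp add: distr_distr)
  then show ?thesis
    using s \<gamma> F \<open>prob_space L\<close> unfolding plans_def by (simp add: comp_def prob_space.prob_space_distr)
qed

lemma cost3_nonneg: "cost3 p \<ge> 0"
  by (simp add: cost3_def split: prod.split)

lemma cost3_measurable[measurable]: "cost3 \<in> borel_measurable borel"
  unfolding cost3_def by measurable

lemma cost3_collapse:
  "cost3 (x, x, z) + cost3 (y, y, z) + 2 * (norm (x - y))\<^sup>2 = 2 * cost3 (x, y, z)"
  by (simp add: cost3_def norm_minus_commute)

lemma power2_norm_diff_le:
  fixes a b :: "'a::real_normed_vector"
  shows "(norm (a - b))\<^sup>2 \<le> 2 * (norm a)\<^sup>2 + 2 * (norm b)\<^sup>2"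
proof -
  have "(norm (a - b))\<^sup>2 \<le> (norm a + norm b)\<^sup>2"
    by (simp add: power_mono norm_triangle_ineq4)
  also have "\<dots> \<le> 2 * (norm a)\<^sup>2 + 2 * (norm b)\<^sup>2"
    using zero_le_power2[of "norm a - norm b"] by (simp add: power2_diff power2_sum)
  finally show ?thesis .
qed

lemma cost3_le: "cost3 (x, y, z) \<le> 4 * ((norm x)\<^sup>2 + (norm y)\<^sup>2 + (norm z)\<^sup>2)"
  using power2_norm_diff_le[of x y] power2_norm_diff_le[of x z] power2_norm_diff_le[of y z]
  by (simp add: cost3_def)

lemma nn_integral_cost3_finite:
  assumes L: "L \<in> plans \<mu> \<nu> \<gamma>"
    and "(\<integral>\<^sup>+x. ennreal ((norm x)\<^sup>2) \<partial>\<mu>) < \<infinity>" "(\<integral>\<^sup>+x. ennreal ((norm x)\<^sup>2) \<partial>\<nu>) < \<infinity>"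
    and "(\<integral>\<^sup>+x. ennreal ((norm x)\<^sup>2) \<partial>\<gamma>) < \<infinity>"
  shows "(\<integral>\<^sup>+p. ennreal (cost3 p) \<partial>L) < \<infinity>"
proof -
  have sL: "sets L = sets borel" using L unfolding plans_def by auto
  note mL = measurable_cong_sets[OF sL refl]
  let ?m = "\<lambda>M. \<integral>\<^sup>+x. ennreal ((norm x)\<^sup>2) \<partial>M"
  have moment: "(\<integral>\<^sup>+p. ennreal ((norm (s p))\<^sup>2) \<partial>L) = ?m \<kappa>"
    if "s \<in> borel_measurable borel" and "distr L borel s = \<kappa>" for s :: "pt \<times> pt \<times> pt \<Rightarrow> pt" and \<kappa>
  proof -
    have "(\<integral>\<^sup>+p. ennreal ((norm (s p))\<^sup>2) \<partial>L) = ?m (distr L borel s)"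
      using that(1) by (subst nn_integral_distr) (auto simp: mL)
    with that(2) show ?thesis by simp
  qed
  have "(\<integral>\<^sup>+p. ennreal (cost3 p) \<partial>L) \<le> (\<integral>\<^sup>+p. 4 * ennreal ((norm (fst p))\<^sup>2)
      + 4 * ennreal ((norm (fst (snd p)))\<^sup>2) + 4 * ennreal ((norm (snd (snd p)))\<^sup>2) \<partial>L)"
  proof (intro nn_integral_mono)
    fix p :: "pt \<times> pt \<times> pt"
    obtain x y z where p: "p = (x, y, z)" by (cases p) auto
    have "ennreal (cost3 p) \<le> ennreal (4 * (norm x)\<^sup>2 + 4 * (norm y)\<^sup>2 + 4 * (norm z)\<^sup>2)"
      unfolding p using cost3_le[of x y z] by (intro ennreal_leI) simp
    then show "ennreal (cost3 p) \<le> 4 * ennreal ((norm (fst p))\<^sup>2)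
      + 4 * ennreal ((norm (fst (snd p)))\<^sup>2) + 4 * ennreal ((norm (snd (snd p)))\<^sup>2)"
      by (simp add: p ennreal_plus ennreal_mult)
  qed
  also have "\<dots> = 4 * ?m \<mu> + 4 * ?m \<nu> + 4 * ?m \<gamma>"
    using L by (simp add: nn_integral_add nn_integral_cmult mL moment plans_def)
  also have "\<dots> < \<infinity>" using assms(2-4) by (simp add: ennreal_mult_less_top)
  finally show ?thesis .
qed

lemma nn_integral_cost3_collapse:
  fixes L :: "(pt \<times> pt \<times> pt) measure"
  assumes sL: "sets L = sets borel"
  shows "(\<integral>\<^sup>+p. ennreal (cost3 (fst p, fst p, snd (snd p))) \<partial>L)
      + (\<integral>\<^sup>+p. ennreal (cost3 (fst (snd p), fst (snd p), snd (snd p))) \<partial>L)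
      + 2 * (\<integral>\<^sup>+p. ennreal ((norm (fst p - fst (snd p)))\<^sup>2) \<partial>L)
    = 2 * (\<integral>\<^sup>+p. ennreal (cost3 p) \<partial>L)"
proof -
  note mL = measurable_cong_sets[OF sL refl]
  have "ennreal (cost3 (x, x, z)) + ennreal (cost3 (y, y, z)) + 2 * ennreal ((norm (x - y))\<^sup>2)
      = 2 * ennreal (cost3 (x, y, z))" for x y z
  proof -
    have "ennreal (cost3 (x, x, z)) + ennreal (cost3 (y, y, z)) + 2 * ennreal ((norm (x - y))\<^sup>2)
        = ennreal (cost3 (x, x, z) + cost3 (y, y, z) + 2 * (norm (x - y))\<^sup>2)"
      using cost3_nonneg[of "(x, x, z)"] cost3_nonneg[of "(y, y, z)"] by (simp add: ennreal_plus ennreal_mult)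
    also have "\<dots> = 2 * ennreal (cost3 (x, y, z))"
      using cost3_nonneg[of "(x, y, z)"] by (simp add: cost3_collapse ennreal_mult)
    finally show ?thesis .
  qed
  then have "(\<integral>\<^sup>+p. ennreal (cost3 (fst p, fst p, snd (snd p)))
        + ennreal (cost3 (fst (snd p), fst (snd p), snd (snd p)))
        + 2 * ennreal ((norm (fst p - fst (snd p)))\<^sup>2) \<partial>L)
      = (\<integral>\<^sup>+p. 2 * ennreal (cost3 p) \<partial>L)"
    by (intro nn_integral_cong) (auto split: prod.split)
  then show ?thesis by (simp add: nn_integral_add nn_integral_cmult mL)
qed

lemma optimal_plan_AE_diagonal:
  assumes opt: "optimal_plan \<mu> \<mu> \<gamma> L"
    and \<mu>: "(\<integral>\<^sup>+x. ennreal ((norm x)\<^sup>2) \<partial>\<mu>) < \<infinity>"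
    and \<gamma>: "(\<integral>\<^sup>+x. ennreal ((norm x)\<^sup>2) \<partial>\<gamma>) < \<infinity>"
  shows "AE p in L. fst p = fst (snd p)"
proof -
  define C where "C M = (\<integral>\<^sup>+p. ennreal (cost3 p) \<partial>M)" for M
  have L: "L \<in> plans \<mu> \<mu> \<gamma>" and min: "\<And>L'. L' \<in> plans \<mu> \<mu> \<gamma> \<Longrightarrow> C L \<le> C L'"
    using opt unfolding optimal_plan_def C_def by auto
  have sL: "sets L = sets borel" and m1: "distr L borel fst = \<mu>"
    and m2: "distr L borel (\<lambda>p. fst (snd p)) = \<mu>"
    using L unfolding plans_def by auto
  note mL = measurable_cong_sets[OF sL refl]
  define F1 :: "pt \<times> pt \<times> pt \<Rightarrow> _" where "F1 = (\<lambda>p. (fst p, fst p, snd (snd p)))"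
  define F2 :: "pt \<times> pt \<times> pt \<Rightarrow> _" where "F2 = (\<lambda>p. (fst (snd p), fst (snd p), snd (snd p)))"
  have [measurable]: "F1 \<in> borel_measurable borel" "F2 \<in> borel_measurable borel"
    unfolding F1_def F2_def by measurable
  have plans: "distr L borel F1 \<in> plans \<mu> \<mu> \<gamma>" "distr L borel F2 \<in> plans \<mu> \<mu> \<gamma>"
    using plans_collapse[OF L _ m1] plans_collapse[OF L _ m2] by (simp_all add: F1_def F2_def)
  define A where "A = C (distr L borel F1) + C (distr L borel F2)"
  define D where "D = (\<integral>\<^sup>+p. ennreal ((norm (fst p - fst (snd p)))\<^sup>2) \<partial>L)"
  have identity: "A + 2 * D = 2 * C L"
    using nn_integral_cost3_collapse[OF sL]
    by (simp add: A_def D_def C_def F1_def F2_def nn_integral_distr mL)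
  have "2 * C L \<le> A"
    unfolding A_def using add_mono[OF min[OF plans(1)] min[OF plans(2)]] by (simp add: mult_2)
  then have "A + 2 * D \<le> A + 0" using identity by simp
  moreover have "A \<noteq> \<infinity>"
  proof -
    have "A \<le> 2 * C L" using identity by (metis le_iff_add)
    also have "\<dots> < \<infinity>"
      using nn_integral_cost3_finite[OF L \<mu> \<mu> \<gamma>] by (simp add: C_def ennreal_mult_less_top)
    finally show ?thesis by simp
  qed
  ultimately have "D = 0" by (simp add: ennreal_add_left_cancel_le)
  then have "AE p in L. ennreal ((norm (fst p - fst (snd p)))\<^sup>2) = 0"
    unfolding D_def by (subst (asm) nn_integral_0_iff_AE) (auto simp: mL)
  then show ?thesis by eventually_elim simp
qed

subsection \<open>Plans induced by maps\<close>

lemma AE_eq_if_distr_graph_eq: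
  fixes f g :: "'a::second_countable_topology \<Rightarrow> 'b::{second_countable_topology, t2_space}"
  assumes sM: "sets M = sets borel" and [measurable]: "f \<in> borel_measurable borel" "g \<in> borel_measurable borel"
    and eq: "distr M borel (\<lambda>x. (x, f x)) = distr M borel (\<lambda>x. (x, g x))"
  shows "AE x in M. f x = g x"
proof -
  note mM = measurable_cong_sets[OF sM refl]
  have S: "{p \<in> space borel. snd p = g (fst p)} \<in> sets (borel :: ('a \<times> 'b) measure)"
    by measurable
  have "AE p in distr M borel (\<lambda>x. (x, g x)). snd p = g (fst p)"
    using S by (subst AE_distr_iff) (auto simp: mM)
  then have "AE p in distr M borel (\<lambda>x. (x, f x)). snd p = g (fst p)" by (simp only: eq)
  then show ?thesis using S by (subst (asm) AE_distr_iff) (auto simp: mM)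
qed

lemma AE_fixed_if_graph_plan_diagonal:
  fixes T G :: "pt \<Rightarrow> pt"
  assumes sM: "sets M = sets borel"
    and [measurable]: "T \<in> borel_measurable borel" "G \<in> borel_measurable borel"
    and "AE p in distr M borel (\<lambda>x. (x, T x, G x)). fst p = fst (snd p)"
  shows "AE x in M. T x = x"
proof -
  have "(\<lambda>x. (x, T x, G x)) \<in> measurable M borel"
    unfolding measurable_cong_sets[OF sM refl] by measurable
  moreover have "{p \<in> space borel. fst p = fst (snd p)} \<in> sets (borel :: (pt \<times> pt \<times> pt) measure)"
    by measurable
  ultimately show ?thesis
    using assms(4) by (subst (asm) AE_distr_iff) (auto simp: eq_commute)
qed

lemma optimal_graph_plan_reflect:
  fixes \<mu> \<gamma> :: "pt measure"
  assumes "prob_space \<mu>" and s\<mu>: "sets \<mu> = sets borel"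
    and plane: "AE x in \<mu>. snd (snd x) = 0"
    and \<gamma>_refl: "distr \<gamma> borel refl3 = \<gamma>"
    and [measurable]: "T \<in> borel_measurable borel" "G \<in> borel_measurable borel"
    and opt: "optimal_plan \<mu> \<mu> \<gamma> (distr \<mu> borel (\<lambda>x. (x, T x, G x)))"
    and T: "AE x in \<mu>. T x = x"
  shows "optimal_plan \<mu> \<mu> \<gamma> (distr \<mu> borel (\<lambda>x. (x, x, refl3 (G x))))"
proof -
  note m\<mu> = measurable_cong_sets[OF s\<mu> refl]
  define F where "F = (\<lambda>x. (x, T x, G x))"
  define F' where "F' = (\<lambda>x. (x, x, refl3 (G x)))"
  have [measurable]: "F \<in> borel_measurable borel" "F' \<in> borel_measurable borel"
    unfolding F_def F'_def by measurable
  have push: "distr (distr \<mu> borel H) borel g = distr \<mu> borel (g \<circ> H)"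
    if "H \<in> borel_measurable borel" "g \<in> borel_measurable borel" for H :: "pt \<Rightarrow> pt \<times> pt \<times> pt" and g :: "_ \<Rightarrow> pt"
    using that by (simp add: distr_distr m\<mu>)
  have "distr \<mu> borel G = \<gamma>"
    using opt push[of F "\<lambda>p. snd (snd p)"] unfolding optimal_plan_def plans_def by (simp add: F_def comp_def)
  then have "distr \<mu> borel (refl3 \<circ> G) = \<gamma>"
    using \<gamma>_refl distr_distr[of refl3 borel borel G \<mu>] by (simp add: m\<mu>)
  then have plan: "distr \<mu> borel F' \<in> plans \<mu> \<mu> \<gamma>"
    unfolding plans_def using push[of F'] \<open>prob_space \<mu>\<close>
    by (simp add: F'_def comp_def distr_id2[OF s\<mu>[symmetric]] prob_space.prob_space_distr m\<mu>)
  have "(\<integral>\<^sup>+p. ennreal (cost3 p) \<partial>distr \<mu> borel F') = (\<integral>\<^sup>+x. ennreal (cost3 (F' x)) \<partial>\<mu>)"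
    by (simp add: nn_integral_distr m\<mu>)
  also have "\<dots> = (\<integral>\<^sup>+x. ennreal (cost3 (F x)) \<partial>\<mu>)"
    using T plane
    by (intro nn_integral_cong_AE, eventually_elim) (simp add: F_def F'_def cost3_def norm_diff_refl3)
  also have "\<dots> = (\<integral>\<^sup>+p. ennreal (cost3 p) \<partial>distr \<mu> borel F)"
    by (simp add: nn_integral_distr m\<mu>)
  finally show ?thesis
    using plan opt unfolding optimal_plan_def F_def F'_def by simp
qed

lemma distr_graph_reflect_ne:
  fixes \<mu> :: "pt measure"
  assumes s\<mu>: "sets \<mu> = sets borel"
    and [measurable]: "T \<in> borel_measurable borel" "G \<in> borel_measurable borel"
    and pos: "emeasure \<mu> {x\<in>X. snd (snd (G x)) \<noteq> 0} > 0"
  shows "distr \<mu> borel (\<lambda>x. (x, x, refl3 (G x))) \<noteq> distr \<mu> borel (\<lambda>x. (x, T x, G x))"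
proof
  assume eq: "distr \<mu> borel (\<lambda>x. (x, x, refl3 (G x))) = distr \<mu> borel (\<lambda>x. (x, T x, G x))"
  have "AE x in \<mu>. (x, refl3 (G x)) = (T x, G x)"
    by (rule AE_eq_if_distr_graph_eq[OF s\<mu> _ _ eq]) simp_all
  then have "AE x in \<mu>. snd (snd (G x)) = 0"
    by eventually_elim (simp add: refl3_def prod_eq_iff)
  then obtain N where N: "{x \<in> space \<mu>. snd (snd (G x)) \<noteq> 0} \<subseteq> N" "emeasure \<mu> N = 0" "N \<in> sets \<mu>"
    by (rule AE_E)
  have "emeasure \<mu> {x\<in>X. snd (snd (G x)) \<noteq> 0} \<le> emeasure \<mu> N"
    using N sets_eq_imp_space_eq[OF s\<mu>] by (intro emeasure_mono) auto
  with N pos show False by simp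
qed

theorem mainTheorem16:
  fixes h :: "real \<times> real \<Rightarrow> real" and \<alpha> :: "pt \<Rightarrow> real"
  defines "X \<equiv> {x::pt. snd (snd x) = 0}"
    and "Z \<equiv> sphere (0::pt) 1"
    and "\<mu> \<equiv> distr (density lborel (\<lambda>p. ennreal (h p))) borel (\<lambda>(a, b). (a, b, 0::real))"
    and "\<gamma> \<equiv> density surfS2 (\<lambda>z. ennreal (\<alpha> z * indicator (sphere 0 1) z))"
  assumes h_meas: "h \<in> borel_measurable lborel"
    and h_nonneg: "\<forall>p. h p \<ge> 0"
    and h_int: "integrable lborel h"
    and \<mu>_prob: "prob_space \<mu>"
    and \<mu>_cpt: "compact (Spt \<mu>)"
    and \<alpha>_cont: "continuous_on Z \<alpha>"
    and \<alpha>_pos: "\<forall>z\<in>Z. \<alpha> z > 0"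
    and \<alpha>_sym: "\<forall>z\<in>Z. \<alpha> (fst z, fst (snd z), - snd (snd z)) = \<alpha> z"
    and \<alpha>_norm: "(\<integral>\<^sup>+z. ennreal (\<alpha> z * indicator Z z) \<partial>surfS2) = 1"
  shows "(\<forall>L. optimal_plan \<mu> \<mu> \<gamma> L \<longrightarrow> (\<forall>(x, y, z)\<in>Spt L. x = y)) \<and>
    (\<forall>T G. T \<in> borel_measurable borel \<and> G \<in> borel_measurable borel \<and>
        (\<forall>x\<in>X. T x \<in> X \<and> G x \<in> Z) \<and>
        optimal_plan \<mu> \<mu> \<gamma> (distr \<mu> borel (\<lambda>x. (x, T x, G x))) \<longrightarrow>
      (AE x in \<mu>. T x = x) \<and>
      optimal_plan \<mu> \<mu> \<gamma>
        (distr \<mu> borel (\<lambda>x. (x, x, (fst (G x), fst (snd (G x)), - snd (snd (G x)))))) \<and>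
      (emeasure \<mu> {x\<in>X. snd (snd (G x)) \<noteq> 0} > 0 \<longrightarrow>
        distr \<mu> borel (\<lambda>x. (x, x, (fst (G x), fst (snd (G x)), - snd (snd (G x)))))
          \<noteq> distr \<mu> borel (\<lambda>x. (x, T x, G x))))"
proof -
  have s\<mu>: "sets \<mu> = sets borel" unfolding \<mu>_def by simp
  interpret \<mu>: prob_space \<mu> by (rule \<mu>_prob)
  have \<mu>_moment: "(\<integral>\<^sup>+x. ennreal ((norm x)\<^sup>2) \<partial>\<mu>) < \<infinity>"
    by (rule nn_integral_norm_sq_finite_if_compact_Spt[OF \<mu>.finite_measure_axioms s\<mu> \<mu>_cpt])
  have \<mu>_plane: "AE x in \<mu>. snd (snd x) = 0"
    unfolding \<mu>_def by (subst AE_distr_iff) (auto simp: case_prod_beta)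
  have \<gamma>_moment: "(\<integral>\<^sup>+x. ennreal ((norm x)\<^sup>2) \<partial>\<gamma>) < \<infinity>"
    using \<alpha>_norm borel_measurable_sphere_density[OF \<alpha>_cont[unfolded Z_def]]
    by (simp add: \<gamma>_def Z_def surfS2_def nn_integral_norm_sq_density_sphere)
  have \<gamma>_refl: "distr \<gamma> borel refl3 = \<gamma>"
    using distr_refl3_sphere_density \<alpha>_cont \<alpha>_sym unfolding \<gamma>_def Z_def by blast
  note diagonal = optimal_plan_AE_diagonal[OF _ \<mu>_moment \<gamma>_moment]
  have "Spt L \<subseteq> {p. fst p = fst (snd p)}" if "optimal_plan \<mu> \<mu> \<gamma> L" for L
    using that diagonal[OF that] unfolding optimal_plan_def plans_def
    by (intro Spt_subset_if_AE_closed closed_Collect_eq continuous_intros) auto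
  moreover have "(AE x in \<mu>. T x = x) \<and> optimal_plan \<mu> \<mu> \<gamma> (distr \<mu> borel (\<lambda>x. (x, x, refl3 (G x))))
      \<and> (emeasure \<mu> {x\<in>X. snd (snd (G x)) \<noteq> 0} > 0 \<longrightarrow>
        distr \<mu> borel (\<lambda>x. (x, x, refl3 (G x))) \<noteq> distr \<mu> borel (\<lambda>x. (x, T x, G x)))"
    if "T \<in> borel_measurable borel" "G \<in> borel_measurable borel"
      and opt: "optimal_plan \<mu> \<mu> \<gamma> (distr \<mu> borel (\<lambda>x. (x, T x, G x)))" for T G
  proof -
    have T: "AE x in \<mu>. T x = x"
      by (rule AE_fixed_if_graph_plan_diagonal[OF s\<mu> that(1,2) diagonal[OF opt]])
    then show ?thesis
      using optimal_graph_plan_reflect[OF \<mu>_prob s\<mu> \<mu>_plane \<gamma>_refl that T]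
        distr_graph_reflect_ne[OF s\<mu> that(1,2)]
      by blast
  qed
  ultimately show ?thesis unfolding refl3_def by fastforce
qed

end
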